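(* Let $\lambda>1$, $E\in\mathbb{R}$, $v:\mathbb{T}\to\mathbb{R}$, $\omega\in\mathbb{R}$ and $\theta_0\in\mathbb{T}$. Let $s_0<r_0$ be such that the fibre orbits $r_{k+1}=\lambda^2v(\theta_k)-E-1/r_k$, $s_{k+1}=\lambda^2v(\theta_k)-E-1/s_k$ (with $\theta_k=\theta_0+k\omega$) satisfy $r_k,s_k\in B$ for all $k\ge0$. If $r_0-s_0\ge\lambda^{-7}$, then for every integer $t>0$, $$\frac{|\{0\le j<t:r_j\in B^s\}|}{t}\le\frac23+\frac{3}{2t}.$$
   Context: $B=[\lambda^{-2},\lambda^2]$, $B^s=[\lambda^{-2},\lambda^{-1}]$. *)

theory Defs
  imports Complex_Main
begin

definition Bset :: "real \<Rightarrow> real set" where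
  "Bset lam = {lam powi (-2) .. lam\<^sup>2}"

definition Bs :: "real \<Rightarrow> real set" where
  "Bs lam = {lam powi (-2) .. lam powi (-1)}"

end

theory Submission
  imports Defs
begin

text \<open>Two orbits of the same fibre map x \<mapsto> c - 1/x move apart by the factor 1/(r_k s_k) in
  each step, so r_0 - s_0 = (r_t - s_t) \<Prod>_{k<t} r_k s_k. Since s_k < r_k, the factor r_k s_k is at
  most \<lambda>^-2 when r_k \<in> B^s and at most \<lambda>^4 otherwise. With a visits to B^s among the first t
  steps this gives \<lambda>^-7 \<le> r_0 - s_0 \<le> \<lambda>^2 \<lambda>^-2a \<lambda>^4(t-a), hence 6a \<le> 9 + 4t.\<close>

lemma fibre_orbits_gap_product:
  fixes r s c :: "nat \<Rightarrow> real"
  assumes r_step: "\<And>k. r (Suc k) = c k - 1 / r k"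
    and s_step: "\<And>k. s (Suc k) = c k - 1 / s k"
    and r_pos: "\<And>k. r k > 0" and s_pos: "\<And>k. s k > 0"
    and "s 0 < r 0"
  shows "s n < r n \<and> r 0 - s 0 = (r n - s n) * (\<Prod>k<n. r k * s k)"
proof (induction n)
  case 0
  then show ?case using \<open>s 0 < r 0\<close> by simp
next
  case (Suc n)
  have gap: "r (Suc n) - s (Suc n) = (r n - s n) / (r n * s n)"
    using r_pos[of n] s_pos[of n] by (simp add: r_step s_step field_simps)
  moreover have "(r n - s n) / (r n * s n) > 0"
    using Suc r_pos[of n] s_pos[of n] by simp
  ultimately have "s (Suc n) < r (Suc n)"
    by simp
  moreover have "(r (Suc n) - s (Suc n)) * (\<Prod>k<Suc n. r k * s k)
      = (r n - s n) * (\<Prod>k<n. r k * s k)"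
    using r_pos[of n] s_pos[of n] by (simp add: gap)
  ultimately show ?case using Suc.IH by linarith
qed

lemma prod_le_two_valued_bound:
  fixes f :: "'a \<Rightarrow> 'b::linordered_semidom"
  assumes "finite A"
    and "\<And>k. k \<in> A \<Longrightarrow> 0 \<le> f k"
    and "\<And>k. k \<in> A \<Longrightarrow> P k \<Longrightarrow> f k \<le> x"
    and "\<And>k. k \<in> A \<Longrightarrow> \<not> P k \<Longrightarrow> f k \<le> y"
  shows "prod f A \<le> x ^ card (A \<inter> {k. P k}) * y ^ card (A \<inter> - {k. P k})"
proof -
  have "prod f A \<le> (\<Prod>k\<in>A. if P k then x else y)"
    using assms by (intro prod_mono) auto
  also have "\<dots> = x ^ card (A \<inter> {k. P k}) * y ^ card (A \<inter> - {k. P k})"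
    using \<open>finite A\<close> by (simp add: prod.If_cases)
  finally show ?thesis .
qed

lemma inverse_power_le_imp_le_exp:
  fixes lam :: real
  assumes "lam > 1" and "inverse (lam ^ m) \<le> lam ^ n * inverse (lam ^ p)"
  shows "p \<le> m + n"
proof -
  have "lam ^ p \<le> lam ^ n * lam ^ m"
    using assms by (simp add: field_simps)
  then show ?thesis
    using \<open>lam > 1\<close> by (simp add: power_add[symmetric] power_le_imp_le_exp)
qed

lemma Bset_pos: "lam > 0 \<Longrightarrow> x \<in> Bset lam \<Longrightarrow> x > 0"
  by (auto simp: Bset_def power_int_minus intro: less_le_trans[rotated])

lemma Bs_product_le:
  fixes lam r s :: real
  assumes "lam > 0" "0 < s" "s < r" "r \<in> Bs lam"
  shows "r * s \<le> inverse (lam ^ 2)"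
proof -
  have "r \<le> inverse lam" using \<open>r \<in> Bs lam\<close> by (simp add: Bs_def power_int_minus)
  then have "r * s \<le> inverse lam * inverse lam"
    using assms by (intro mult_mono) auto
  then show ?thesis by (simp add: power2_eq_square)
qed

lemma Bset_product_le:
  fixes lam r s :: real
  assumes "0 < s" "s < r" "r \<in> Bset lam"
  shows "r * s \<le> lam ^ 4"
proof -
  have "r * s \<le> lam ^ 2 * lam ^ 2"
    using assms by (intro mult_mono) (auto simp: Bset_def)
  then show ?thesis by simp
qed

lemma fibre_orbits_gap_le:
  fixes lam :: real and r s c :: "nat \<Rightarrow> real"
  defines "V \<equiv> {j. r j \<in> Bs lam}"
  assumes "lam > 0"
    and "\<And>k. r (Suc k) = c k - 1 / r k"
    and "\<And>k. s (Suc k) = c k - 1 / s k"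
    and r_B: "\<And>k. r k \<in> Bset lam" and s_B: "\<And>k. s k \<in> Bset lam"
    and "s 0 < r 0"
  shows "r 0 - s 0 \<le> lam ^ (2 + 4 * card ({..<t} \<inter> - V)) * inverse (lam ^ (2 * card ({..<t} \<inter> V)))"
proof -
  have pos: "r k > 0" "s k > 0" for k
    using Bset_pos \<open>lam > 0\<close> r_B s_B by blast+
  have gap: "s n < r n \<and> r 0 - s 0 = (r n - s n) * (\<Prod>k<n. r k * s k)" for n
    by (rule fibre_orbits_gap_product) (use assms(3-4,7) pos in auto)
  have "(r t - s t) * (\<Prod>k<t. r k * s k) \<le> lam ^ 2 * (\<Prod>k<t. r k * s k)"
  proof (intro mult_right_mono prod_nonneg)
    show "r t - s t \<le> lam ^ 2"
      using r_B[of t] pos(2)[of t] by (simp add: Bset_def)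
  qed (use pos in \<open>auto intro: less_imp_le\<close>)
  also have "\<dots> \<le> lam ^ 2 * (inverse (lam ^ 2) ^ card ({..<t} \<inter> V) * (lam ^ 4) ^ card ({..<t} \<inter> - V))"
    unfolding V_def using \<open>lam > 0\<close> r_B gap pos
    by (intro mult_left_mono prod_le_two_valued_bound)
      (auto intro: Bs_product_le Bset_product_le less_imp_le)
  also have "\<dots> = lam ^ (2 + 4 * card ({..<t} \<inter> - V)) * inverse (lam ^ (2 * card ({..<t} \<inter> V)))"
    unfolding power_add power_mult power_inverse by (simp add: ac_simps)
  finally show ?thesis
    using gap[of t] by simp
qed

theorem lemmaB5:
  fixes lam E \<omega> \<theta>0 :: real and v :: "real \<Rightarrow> real" and r s :: "nat \<Rightarrow> real"
  assumes "lam > 1"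
    and "\<And>x. v (x + 1) = v x"
    and "s 0 < r 0"
    and "\<And>k. r (Suc k) = lam\<^sup>2 * v (\<theta>0 + real k * \<omega>) - E - 1 / r k"
    and "\<And>k. s (Suc k) = lam\<^sup>2 * v (\<theta>0 + real k * \<omega>) - E - 1 / s k"
    and "\<And>k. r k \<in> Bset lam"
    and "\<And>k. s k \<in> Bset lam"
    and "r 0 - s 0 \<ge> lam powi (-7)"
    and "t > (0::nat)"
  shows "real (card {j. j < t \<and> r j \<in> Bs lam}) / real t \<le> 2/3 + 3 / (2 * real t)"
proof -
  let ?V = "{j. r j \<in> Bs lam}"
  define a where "a = card ({..<t} \<inter> ?V)"
  define b where "b = card ({..<t} \<inter> - ?V)"
  have "inverse (lam ^ 7) \<le> r 0 - s 0"
    using assms(8) by (simp add: power_int_minus)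
  also have "\<dots> \<le> lam ^ (2 + 4 * b) * inverse (lam ^ (2 * a))"
    unfolding a_def b_def using assms(1,3-7) by (intro fibre_orbits_gap_le) auto
  finally have "2 * a \<le> 7 + (2 + 4 * b)"
    by (rule inverse_power_le_imp_le_exp[OF assms(1)])
  moreover have "a + b = t"
    using card_Int_Diff[of "{..<t}" ?V] by (simp add: a_def b_def Diff_eq)
  moreover have "{j. j < t \<and> r j \<in> Bs lam} = {..<t} \<inter> ?V"
    by auto
  ultimately show ?thesis
    using assms(9) by (simp add: a_def field_simps)
qed

end
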